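(* Let $\mathcal{G}$ be a MAG and let $H_1,H_2,H$ be heads with maximal vertex $i$ such that $H_1\to^KH$ and $H_2\to^LH$ for some $K,L$. Then $H_3=\mathrm{barren}(H_1\cup H_2)$ is a head and $H_3\to^{K'}H$ for $K'=H_3\setminus H$.
   Context: A MAG is an acyclic directed mixed graph (directed and bidirected edges, no directed cycles) with $\mathrm{sib}(v)\cap\mathrm{an}(v)=\emptyset$ for all $v$ and in which every nonadjacent pair is m-separated by some set. Vertices are numbered topologically. $\mathrm{barren}_{\mathcal{G}'}(W)=\{w\in W:\mathrm{de}_{\mathcal{G}'}(w)\cap W=\{w\}\}$ (with $\mathrm{barren}=\mathrm{barren}_{\mathcal{G}}$); a nonempty $H$ is a head if $\mathrm{barren}(H)=H$ and $H$ lies in one district (bidirected-connected component) of $\mathcal{G}_{\mathrm{an}(H)}$. For a head $H$ with maximal vertex $i$ and $\emptyset\ne K\subseteq H\setminus\{i\}$, $H\to^KH'$ means $H'=\mathrm{barren}_{\mathcal{G}'}(\mathrm{dis}_{\mathcal{G}'}(i))$ where $\mathcal{G}'=\mathcal{G}_{\mathrm{an}(H)\setminus K}$. *)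

theory Defs
  imports Main
begin

text \<open>Mixed graphs on natural-number vertices: directed edges (a,b) mean a \<rightarrow> b;
  bidirected edges are stored as a symmetric relation.\<close>

record mgraph =
  verts  :: "nat set"
  dedges :: "(nat \<times> nat) set"
  bedges :: "(nat \<times> nat) set"

definition induced :: "mgraph \<Rightarrow> nat set \<Rightarrow> mgraph" where
  "induced G A = \<lparr> verts = verts G \<inter> A,
                    dedges = dedges G \<inter> (A \<times> A),
                    bedges = bedges G \<inter> (A \<times> A) \<rparr>"

definition anc :: "mgraph \<Rightarrow> nat \<Rightarrow> nat set" where
  "anc G v = {u \<in> verts G. (u, v) \<in> (dedges G)\<^sup>*}"

definition anc_set :: "mgraph \<Rightarrow> nat set \<Rightarrow> nat set" where
  "anc_set G W = (\<Union>w\<in>W. anc G w)"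

definition desc :: "mgraph \<Rightarrow> nat \<Rightarrow> nat set" where
  "desc G v = {u \<in> verts G. (v, u) \<in> (dedges G)\<^sup>*}"

definition sib :: "mgraph \<Rightarrow> nat \<Rightarrow> nat set" where
  "sib G v = {u. (u, v) \<in> bedges G}"

definition barren :: "mgraph \<Rightarrow> nat set \<Rightarrow> nat set" where
  "barren G W = {w \<in> W. desc G w \<inter> W = {w}}"

definition dis :: "mgraph \<Rightarrow> nat \<Rightarrow> nat set" where
  "dis G v = {u \<in> verts G. (u, v) \<in> (bedges G)\<^sup>*}"

definition adjacent :: "mgraph \<Rightarrow> nat \<Rightarrow> nat \<Rightarrow> bool" where
  "adjacent G a b \<longleftrightarrow> (a, b) \<in> dedges G \<or> (b, a) \<in> dedges G \<or> (a, b) \<in> bedges G"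

text \<open>Edge kinds on a path, read from vertex vs!j to vs!(j+1).\<close>
datatype ekind = Fwd | Bwd | Bid

definition edge_ok :: "mgraph \<Rightarrow> nat \<Rightarrow> ekind \<Rightarrow> nat \<Rightarrow> bool" where
  "edge_ok G u k v = (case k of Fwd \<Rightarrow> (u, v) \<in> dedges G
                              | Bwd \<Rightarrow> (v, u) \<in> dedges G
                              | Bid \<Rightarrow> (u, v) \<in> bedges G)"

definition head_at_end :: "ekind \<Rightarrow> bool" where
  "head_at_end k \<longleftrightarrow> k = Fwd \<or> k = Bid"

definition head_at_start :: "ekind \<Rightarrow> bool" where
  "head_at_start k \<longleftrightarrow> k = Bwd \<or> k = Bid"

definition is_path :: "mgraph \<Rightarrow> nat list \<Rightarrow> ekind list \<Rightarrow> bool" where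
  "is_path G vs es \<longleftrightarrow> length vs = Suc (length es) \<and> distinct vs \<and> set vs \<subseteq> verts G \<and>
     (\<forall>j < length es. edge_ok G (vs ! j) (es ! j) (vs ! Suc j))"

definition collider :: "ekind list \<Rightarrow> nat \<Rightarrow> bool" where
  "collider es j \<longleftrightarrow> head_at_end (es ! (j - 1)) \<and> head_at_start (es ! j)"

definition m_connecting :: "mgraph \<Rightarrow> nat set \<Rightarrow> nat list \<Rightarrow> ekind list \<Rightarrow> bool" where
  "m_connecting G Z vs es \<longleftrightarrow> is_path G vs es \<and>
     (\<forall>j. 0 < j \<and> j < length es \<longrightarrow>
        (if collider es j then vs ! j \<in> anc_set G Z else vs ! j \<notin> Z))"

definition m_separated :: "mgraph \<Rightarrow> nat \<Rightarrow> nat \<Rightarrow> nat set \<Rightarrow> bool" where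
  "m_separated G a b Z \<longleftrightarrow>
     \<not> (\<exists>vs es. m_connecting G Z vs es \<and> hd vs = a \<and> last vs = b)"

text \<open>A MAG whose vertices are numbered topologically (directed edges go upward).\<close>
definition MAG :: "mgraph \<Rightarrow> bool" where
  "MAG G \<longleftrightarrow> finite (verts G) \<and>
     dedges G \<subseteq> verts G \<times> verts G \<and> bedges G \<subseteq> verts G \<times> verts G \<and>
     sym (bedges G) \<and> irrefl (bedges G) \<and>
     (\<forall>a b. (a, b) \<in> dedges G \<longrightarrow> a < b) \<and>
     (\<forall>v \<in> verts G. sib G v \<inter> anc G v = {}) \<and>
     (\<forall>a \<in> verts G. \<forall>b \<in> verts G. a \<noteq> b \<and> \<not> adjacent G a b \<longrightarrow>
        (\<exists>Z. Z \<subseteq> verts G - {a, b} \<and> m_separated G a b Z))"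

definition head :: "mgraph \<Rightarrow> nat set \<Rightarrow> bool" where
  "head G H \<longleftrightarrow> H \<noteq> {} \<and> barren G H = H \<and>
     (\<exists>v \<in> H. H \<subseteq> dis (induced G (anc_set G H)) v)"

text \<open>H \<rightarrow>^K H' ; the maximal vertex of H is Max H (topological numbering).\<close>
definition head_step :: "mgraph \<Rightarrow> nat set \<Rightarrow> nat set \<Rightarrow> nat set \<Rightarrow> bool" where
  "head_step G H K H' \<longleftrightarrow> head G H \<and> K \<noteq> {} \<and> K \<subseteq> H - {Max H} \<and>
     (let G' = induced G (anc_set G H - K) in H' = barren G' (dis G' (Max H)))"

end

theory Submission
  imports Defs
begin

text \<open>Let \<open>i\<close> be the common maximal vertex and \<open>D\<close> the district of \<open>i\<close> in the subgraph
  induced by \<open>an(H)\<close>. Removing \<open>K\<close> from \<open>an(H\<^sub>1)\<close> removes only sinks, so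
  \<open>S\<^sub>1 = an(H\<^sub>1) \<setminus> K\<close> is ancestral and contains \<open>an(H)\<close>; the district of \<open>i\<close> in \<open>S\<^sub>1\<close>
  lies in \<open>an(H)\<close>, hence equals \<open>D\<close>. Likewise for \<open>S\<^sub>2 = an(H\<^sub>2) \<setminus> L\<close>. The set
  \<open>S\<^sub>3 = an(H\<^sub>3) \<setminus> (H\<^sub>3 \<setminus> H)\<close> is again ancestral and contains \<open>an(H)\<close>, and each of its
  vertices lies in \<open>S\<^sub>1\<close>, in \<open>S\<^sub>2\<close> or in \<open>H\<^sub>3 \<inter> H \<subseteq> D\<close>. So no bidirected edge leaves
  \<open>D\<close> inside \<open>S\<^sub>3\<close>: the district of \<open>i\<close> in \<open>S\<^sub>3\<close> is \<open>D\<close>, whose barren part is \<open>H\<close>.\<close>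

definition ancestral :: "mgraph \<Rightarrow> nat set \<Rightarrow> bool" where
  "ancestral G S \<longleftrightarrow> (\<forall>x y. (x, y) \<in> dedges G \<longrightarrow> y \<in> S \<longrightarrow> x \<in> S)"

lemma MAG_dedgesD:
  assumes "MAG G" "(a, b) \<in> dedges G"
  shows "a < b" "a \<in> verts G" "b \<in> verts G"
proof -
  have "dedges G \<subseteq> verts G \<times> verts G" "\<forall>a b. (a, b) \<in> dedges G \<longrightarrow> a < b"
    using assms(1) by (simp_all add: MAG_def)
  then show "a < b" "a \<in> verts G" "b \<in> verts G" using assms(2) by auto
qed

lemma MAG_bedgesD:
  assumes "MAG G" "(a, b) \<in> bedges G"
  shows "(b, a) \<in> bedges G" "a \<in> verts G" "b \<in> verts G"
proof -
  have "bedges G \<subseteq> verts G \<times> verts G" "sym (bedges G)"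
    using assms(1) by (simp_all add: MAG_def)
  then show "(b, a) \<in> bedges G" "a \<in> verts G" "b \<in> verts G"
    using assms(2) by (auto dest: symD)
qed

lemma MAG_finite_verts: "MAG G \<Longrightarrow> finite (verts G)"
  by (simp add: MAG_def)

lemma MAG_rtrancl_le:
  assumes "MAG G" "(a, b) \<in> (dedges G)\<^sup>*"
  shows "a \<le> b"
  using assms(2)
proof (induction rule: rtrancl_induct)
  case (step y z)
  then show ?case using MAG_dedgesD(1)[OF assms(1)] by fastforce
qed simp

lemma anc_set_iff:
  "u \<in> anc_set G W \<longleftrightarrow> u \<in> verts G \<and> (\<exists>w\<in>W. (u, w) \<in> (dedges G)\<^sup>*)"
  by (auto simp: anc_set_def anc_def)

lemma anc_set_Un: "anc_set G (X \<union> Y) = anc_set G X \<union> anc_set G Y"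
  by (auto simp: anc_set_def)

lemma subset_anc_set: "W \<subseteq> verts G \<Longrightarrow> W \<subseteq> anc_set G W"
  by (auto simp: anc_set_iff)

lemma barren_subset: "barren G W \<subseteq> verts G \<inter> W"
  by (auto simp: barren_def desc_def)

lemma barren_iff:
  assumes "W \<subseteq> verts G"
  shows "w \<in> barren G W \<longleftrightarrow> w \<in> W \<and> (\<forall>u\<in>W. (w, u) \<in> (dedges G)\<^sup>* \<longrightarrow> u = w)"
  using assms by (auto simp: barren_def desc_def)

lemma barren_idem: "barren G (barren G W) = barren G W"
  unfolding barren_def by blast

lemma barren_exists_descendant:
  assumes "MAG G" "W \<subseteq> verts G" "w \<in> W"
  shows "\<exists>u\<in>barren G W. (w, u) \<in> (dedges G)\<^sup>*"
proof -
  define M where "M = {u \<in> W. (w, u) \<in> (dedges G)\<^sup>*}"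
  have "M \<subseteq> verts G" using assms(2) by (auto simp: M_def)
  then have fin: "finite M" using MAG_finite_verts[OF assms(1)] by (rule finite_subset)
  moreover have "w \<in> M" using assms(3) by (simp add: M_def)
  ultimately have uM: "Max M \<in> M" by (intro Max_in) auto
  have "Max M \<in> barren G W"
    unfolding barren_iff[OF assms(2)]
  proof (intro conjI ballI impI)
    show "Max M \<in> W" using uM by (simp add: M_def)
    fix x assume x: "x \<in> W" "(Max M, x) \<in> (dedges G)\<^sup>*"
    then have "(w, x) \<in> (dedges G)\<^sup>*" using uM unfolding M_def by (blast intro: rtrancl_trans)
    then have "x \<le> Max M" using x(1) Max_ge[OF fin] by (simp add: M_def)
    then show "x = Max M" using MAG_rtrancl_le[OF assms(1) x(2)] by simp
  qed
  then show ?thesis using uM by (auto simp: M_def)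
qed

lemma anc_set_barren:
  assumes "MAG G" "W \<subseteq> verts G"
  shows "anc_set G (barren G W) = anc_set G W"
proof
  show "anc_set G (barren G W) \<subseteq> anc_set G W"
    using barren_subset[of G W] unfolding anc_set_def by blast
  show "anc_set G W \<subseteq> anc_set G (barren G W)"
  proof
    fix x assume "x \<in> anc_set G W"
    then obtain w where w: "x \<in> verts G" "w \<in> W" "(x, w) \<in> (dedges G)\<^sup>*"
      by (auto simp: anc_set_iff)
    obtain u where "u \<in> barren G W" "(w, u) \<in> (dedges G)\<^sup>*"
      using barren_exists_descendant[OF assms w(2)] by blast
    with w show "x \<in> anc_set G (barren G W)"
      unfolding anc_set_iff by (blast intro: rtrancl_trans)
  qed
qed

lemma barren_Un_memI:
  assumes "barren G H1 = H1" "barren G H2 = H2"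
    and "x \<in> anc_set G H1 \<union> anc_set G H2"
    and "x \<in> anc_set G H1 \<Longrightarrow> x \<in> H1" "x \<in> anc_set G H2 \<Longrightarrow> x \<in> H2"
  shows "x \<in> barren G (H1 \<union> H2)"
proof -
  have V: "H1 \<subseteq> verts G" "H2 \<subseteq> verts G"
    using barren_subset[of G H1] barren_subset[of G H2] assms(1,2) by auto
  have "u = x" if "u \<in> H1 \<union> H2" "(x, u) \<in> (dedges G)\<^sup>*" for u
  proof (cases "u \<in> H1")
    case True
    then have "x \<in> H1" using that(2) assms(3,4) V by (auto simp: anc_set_iff)
    then show ?thesis using True that(2) assms(1) barren_iff[OF V(1)] by blast
  next
    case False
    then have "u \<in> H2" using that(1) by simp
    moreover from this have "x \<in> H2" using that(2) assms(3,5) V by (auto simp: anc_set_iff)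
    ultimately show ?thesis using that(2) assms(2) barren_iff[OF V(2)] by blast
  qed
  moreover have "x \<in> H1 \<union> H2" using assms(3-5) by blast
  ultimately show ?thesis using V by (simp add: barren_iff)
qed

lemma ancestral_rtrancl_mem:
  assumes "ancestral G S" "(x, y) \<in> (dedges G)\<^sup>*" "y \<in> S"
  shows "x \<in> S"
  using assms(2,3)
  by (induction rule: converse_rtrancl_induct) (use assms(1) in \<open>auto simp: ancestral_def\<close>)

lemma ancestral_rtrancl_induced:
  assumes "ancestral G S" "(x, y) \<in> (dedges G)\<^sup>*" "y \<in> S"
  shows "(x, y) \<in> (dedges G \<inter> S \<times> S)\<^sup>*"
  using assms(2)
proof (induction rule: converse_rtrancl_induct)
  case (step x z)
  have "z \<in> S" using ancestral_rtrancl_mem[OF assms(1) step(2) assms(3)] .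
  with step(1) assms(1) have "(x, z) \<in> dedges G \<inter> S \<times> S" by (auto simp: ancestral_def)
  then show ?case using step(3) by (rule converse_rtrancl_into_rtrancl)
qed simp

lemma anc_set_subset_ancestral:
  assumes "ancestral G S" "W \<subseteq> S"
  shows "anc_set G W \<subseteq> S"
proof
  fix x assume "x \<in> anc_set G W"
  then obtain w where "w \<in> W" "(x, w) \<in> (dedges G)\<^sup>*" by (auto simp: anc_set_iff)
  then show "x \<in> S" using ancestral_rtrancl_mem[OF assms(1)] assms(2) by blast
qed

lemma ancestral_anc_set:
  assumes "MAG G"
  shows "ancestral G (anc_set G W)"
  unfolding ancestral_def
proof (intro allI impI)
  fix x y assume xy: "(x, y) \<in> dedges G" and "y \<in> anc_set G W"
  then obtain w where "w \<in> W" "(y, w) \<in> (dedges G)\<^sup>*" by (auto simp: anc_set_iff)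
  moreover have "x \<in> verts G" using MAG_dedgesD(2)[OF assms \<open>(x, y) \<in> dedges G\<close>] .
  ultimately show "x \<in> anc_set G W"
    using converse_rtrancl_into_rtrancl[OF xy] by (auto simp: anc_set_iff)
qed

text \<open>The vertices of a barren set are sinks of its ancestral set, so removing any of them
  keeps the set ancestral.\<close>

lemma ancestral_anc_set_Diff:
  assumes "MAG G" "barren G W = W" "K \<subseteq> W"
  shows "ancestral G (anc_set G W - K)"
  unfolding ancestral_def
proof (intro allI impI)
  fix x y assume xy: "(x, y) \<in> dedges G" and y: "y \<in> anc_set G W - K"
  then have "x \<in> anc_set G W" using ancestral_anc_set[OF assms(1)] unfolding ancestral_def by blast
  moreover have "x \<notin> K"
  proof
    assume "x \<in> K"
    obtain h where h: "h \<in> W" "(y, h) \<in> (dedges G)\<^sup>*" using y by (auto simp: anc_set_iff)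
    have WV: "W \<subseteq> verts G" using barren_subset[of G W] assms(2) by auto
    have "(x, h) \<in> (dedges G)\<^sup>*" using xy h(2) by (rule converse_rtrancl_into_rtrancl)
    then have "h = x" using assms(2,3) \<open>x \<in> K\<close> h(1) barren_iff[OF WV, of x] by blast
    moreover have "x < y" using MAG_dedgesD(1)[OF assms(1) xy] .
    ultimately show False using MAG_rtrancl_le[OF assms(1) h(2)] by simp
  qed
  ultimately show "x \<in> anc_set G W - K" by simp
qed

lemma barren_induced_ancestral:
  assumes "ancestral G S" "W \<subseteq> S"
  shows "barren (induced G S) W = barren G W"
proof -
  have "desc (induced G S) w \<inter> W = desc G w \<inter> W" for w
  proof
    have "(dedges G \<inter> S \<times> S)\<^sup>* \<subseteq> (dedges G)\<^sup>*" by (rule rtrancl_mono) blast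
    then show "desc (induced G S) w \<inter> W \<subseteq> desc G w \<inter> W"
      by (auto simp: desc_def induced_def)
    show "desc G w \<inter> W \<subseteq> desc (induced G S) w \<inter> W"
      using assms ancestral_rtrancl_induced[OF assms(1)] by (auto simp: desc_def induced_def)
  qed
  moreover have "w \<in> W \<Longrightarrow> w \<in> desc (induced G S) w \<longleftrightarrow> w \<in> desc G w" for w
    using assms by (auto simp: desc_def induced_def)
  ultimately show ?thesis unfolding barren_def by auto
qed

lemma dis_induced:
  "dis (induced G S) v = {u \<in> verts G \<inter> S. (u, v) \<in> (bedges G \<inter> S \<times> S)\<^sup>*}"
  by (simp add: dis_def induced_def)

lemma dis_induced_mono:
  assumes "S \<subseteq> T"
  shows "dis (induced G S) v \<subseteq> dis (induced G T) v"
proof -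
  have "bedges G \<inter> S \<times> S \<subseteq> bedges G \<inter> T \<times> T" using assms by auto
  then show ?thesis unfolding dis_induced using assms rtrancl_mono by blast
qed

lemma dis_induced_subset: "dis (induced G S) v \<subseteq> verts G \<inter> S"
  by (auto simp: dis_induced)

lemma dis_induced_closed:
  assumes "MAG G" "(x, y) \<in> bedges G" "x \<in> S" "y \<in> dis (induced G S) v"
  shows "x \<in> dis (induced G S) v"
  using assms MAG_bedgesD(2)[OF assms(1,2)]
  by (auto simp: dis_induced intro: converse_rtrancl_into_rtrancl)

lemma dis_induced_subsetI:
  assumes "v \<in> D" "\<And>x y. (x, y) \<in> bedges G \<Longrightarrow> x \<in> T \<Longrightarrow> y \<in> D \<Longrightarrow> x \<in> D"
  shows "dis (induced G T) v \<subseteq> D"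
proof
  fix u assume "u \<in> dis (induced G T) v"
  then have "(u, v) \<in> (bedges G \<inter> T \<times> T)\<^sup>*" by (simp add: dis_induced)
  then show "u \<in> D"
    by (induction rule: converse_rtrancl_induct) (use assms in auto)
qed

lemma dis_induced_restrict:
  assumes "MAG G" "v \<in> dis (induced G S) v" "dis (induced G S) v \<subseteq> T" "T \<subseteq> S"
  shows "dis (induced G T) v = dis (induced G S) v"
proof
  show "dis (induced G T) v \<subseteq> dis (induced G S) v" using dis_induced_mono[OF assms(4)] .
  have "v \<in> dis (induced G T) v"
    using assms(2,3) by (auto simp: dis_induced)
  moreover have "x \<in> dis (induced G T) v"
    if "(x, y) \<in> bedges G" "x \<in> S" "y \<in> dis (induced G T) v" for x y
  proof -
    have "x \<in> dis (induced G S) v"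
      using dis_induced_closed[OF assms(1) that(1,2)] that(3) dis_induced_mono[OF assms(4)] by blast
    then show ?thesis using dis_induced_closed[OF assms(1) that(1) _ that(3)] assms(3) by blast
  qed
  ultimately show "dis (induced G S) v \<subseteq> dis (induced G T) v"
    by (rule dis_induced_subsetI)
qed

lemma headD:
  assumes "MAG G" "head G H"
  shows "H \<subseteq> verts G" "finite H" "H \<noteq> {}" "barren G H = H"
proof -
  show b: "barren G H = H" "H \<noteq> {}" using assms(2) by (auto simp: head_def)
  show V: "H \<subseteq> verts G" using barren_subset[of G H] b by auto
  show "finite H" using V MAG_finite_verts[OF assms(1)] by (rule finite_subset)
qed

lemma Max_head_mem: "MAG G \<Longrightarrow> head G H \<Longrightarrow> Max H \<in> H"
  using headD[of G H] by simp

lemma head_subset_dis: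
  assumes "MAG G" "head G H" "x \<in> H"
  shows "H \<subseteq> dis (induced G (anc_set G H)) x"
proof -
  define R where "R = bedges G \<inter> anc_set G H \<times> anc_set G H"
  obtain v where v: "v \<in> H" "H \<subseteq> dis (induced G (anc_set G H)) v"
    using assms(2) by (auto simp: head_def)
  have "sym R" using MAG_bedgesD(1)[OF assms(1)] by (auto simp: R_def sym_def)
  moreover have "(x, v) \<in> R\<^sup>*" using v assms(3) unfolding dis_induced R_def by auto
  ultimately have "(v, x) \<in> R\<^sup>*" using sym_rtrancl[of R] by (auto simp: sym_def)
  show ?thesis
  proof
    fix h assume "h \<in> H"
    then have "h \<in> verts G \<inter> anc_set G H" "(h, v) \<in> R\<^sup>*"
      using v(2) unfolding dis_induced R_def by auto
    with \<open>(v, x) \<in> R\<^sup>*\<close> show "h \<in> dis (induced G (anc_set G H)) x"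
      unfolding dis_induced R_def by (blast intro: rtrancl_trans)
  qed
qed

lemma le_Max_head_if_anc:
  assumes "MAG G" "head G H" "x \<in> anc_set G H"
  shows "x \<le> Max H"
proof -
  obtain h where "h \<in> H" "(x, h) \<in> (dedges G)\<^sup>*" using assms(3) by (auto simp: anc_set_iff)
  then have "x \<le> h" "h \<le> Max H"
    using MAG_rtrancl_le[OF assms(1)] Max_ge[OF headD(2)[OF assms(1,2)]] by auto
  then show ?thesis by simp
qed

text \<open>After a step \<open>H\<^sub>1 \<rightarrow>\<^sup>K H\<close>, the district of the maximal vertex lies in \<open>an(H)\<close>,
  because each of its vertices has a descendant in its barren part \<open>H\<close>.\<close>

lemma head_step_dis:
  assumes "MAG G" "head_step G H1 K H"
  shows "anc_set G H \<subseteq> anc_set G H1 - K"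
    and "dis (induced G (anc_set G H1 - K)) (Max H1) = dis (induced G (anc_set G H)) (Max H1)"
    and "H = barren G (dis (induced G (anc_set G H)) (Max H1))"
    and "Max H1 \<in> dis (induced G (anc_set G H)) (Max H1)"
proof -
  define S where "S = anc_set G H1 - K"
  define D where "D = dis (induced G S) (Max H1)"
  have hd: "head G H1" and K: "K \<subseteq> H1 - {Max H1}"
    and HD: "H = barren (induced G S) D"
    using assms(2) by (auto simp: head_step_def Let_def S_def D_def)
  note h1 = headD[OF assms(1) hd]
  have anc: "ancestral G S" unfolding S_def using ancestral_anc_set_Diff[OF assms(1) h1(4)] K by blast
  have DS: "D \<subseteq> S" using dis_induced_subset unfolding D_def by blast
  have DV: "D \<subseteq> verts G" using dis_induced_subset unfolding D_def by blast
  have H: "H = barren G D" using HD barren_induced_ancestral[OF anc DS] by simp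
  have iD: "Max H1 \<in> D"
    using Max_head_mem[OF assms(1) hd] h1(1) K subset_anc_set[OF h1(1)]
    by (auto simp: D_def S_def dis_induced)
  have "H \<subseteq> S" using H DS barren_subset[of G D] by auto
  then show AH: "anc_set G H \<subseteq> anc_set G H1 - K"
    using anc_set_subset_ancestral[OF anc] unfolding S_def by blast
  have "D \<subseteq> anc_set G H"
    using barren_exists_descendant[OF assms(1) DV] DV unfolding H by (force simp: anc_set_iff)
  then have Deq: "dis (induced G (anc_set G H)) (Max H1) = D"
    using dis_induced_restrict[OF assms(1) _ _ AH] iD unfolding D_def S_def by blast
  show "dis (induced G (anc_set G H1 - K)) (Max H1) = dis (induced G (anc_set G H)) (Max H1)"
    using Deq unfolding D_def S_def ..
  show "H = barren G (dis (induced G (anc_set G H)) (Max H1))"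
    using H Deq by simp
  show "Max H1 \<in> dis (induced G (anc_set G H)) (Max H1)"
    using iD Deq by simp
qed

lemma head_barren_Un:
  assumes "MAG G" "head G H1" "head G H2" "Max H1 = Max H2"
  shows "head G (barren G (H1 \<union> H2))" and "Max (barren G (H1 \<union> H2)) = Max H1"
proof -
  define i where "i = Max H1"
  define H3 where "H3 = barren G (H1 \<union> H2)"
  note h1 = headD[OF assms(1,2)] and h2 = headD[OF assms(1,3)]
  have le_i: "x \<le> i" if "x \<in> anc_set G H1 \<union> anc_set G H2" for x
    using that le_Max_head_if_anc[OF assms(1,2)] le_Max_head_if_anc[OF assms(1,3)] assms(4)
    unfolding i_def by auto
  have H12: "H1 \<union> H2 \<subseteq> anc_set G H1 \<union> anc_set G H2"
    using subset_anc_set[OF h1(1)] subset_anc_set[OF h2(1)] by blast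
  have H3sub: "H3 \<subseteq> H1 \<union> H2" using barren_subset[of G "H1 \<union> H2"] unfolding H3_def by blast
  have iH3: "i \<in> H3"
  proof -
    have "i \<in> H1 \<union> H2" using Max_head_mem[OF assms(1,2)] unfolding i_def by simp
    moreover have "u = i" if "u \<in> H1 \<union> H2" "(i, u) \<in> (dedges G)\<^sup>*" for u
    proof -
      have "u \<le> i" using le_i H12 that(1) by blast
      then show ?thesis using MAG_rtrancl_le[OF assms(1) that(2)] by simp
    qed
    ultimately show ?thesis using barren_iff[of "H1 \<union> H2" G] h1(1) h2(1) unfolding H3_def by simp
  qed
  have A3: "anc_set G H3 = anc_set G H1 \<union> anc_set G H2"
    using anc_set_barren[OF assms(1), of "H1 \<union> H2"] h1(1) h2(1) anc_set_Un unfolding H3_def by simp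
  have "H1 \<subseteq> dis (induced G (anc_set G H1)) i"
    using head_subset_dis[OF assms(1,2) Max_head_mem[OF assms(1,2)]] unfolding i_def .
  also have "\<dots> \<subseteq> dis (induced G (anc_set G H3)) i" by (rule dis_induced_mono) (simp add: A3)
  finally have "H1 \<subseteq> dis (induced G (anc_set G H3)) i" .
  moreover have "H2 \<subseteq> dis (induced G (anc_set G H2)) i"
    using head_subset_dis[OF assms(1,3) Max_head_mem[OF assms(1,3)]] assms(4) unfolding i_def by simp
  moreover have "\<dots> \<subseteq> dis (induced G (anc_set G H3)) i" by (rule dis_induced_mono) (simp add: A3)
  moreover have "barren G H3 = H3" unfolding H3_def by (rule barren_idem)
  ultimately show "head G H3"
    unfolding head_def using iH3 H3sub by blast
  have "finite H3" using H3sub h1(2) h2(2) by (simp add: finite_subset)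
  then show "Max H3 = i"
    using H3sub H12 le_i iH3 by (intro Max_eqI) blast+
qed

lemma barren_Un_Diff_nonempty:
  assumes "MAG G" "head_step G H1 K H" "H2 \<subseteq> verts G"
  shows "barren G (H1 \<union> H2) - H \<noteq> {}"
proof -
  obtain k where k: "k \<in> K" "k \<in> H1"
    using assms(2) by (auto simp: head_step_def)
  have "H1 \<union> H2 \<subseteq> verts G"
    using assms(2,3) headD[OF assms(1)] by (auto simp: head_step_def)
  then obtain u where u: "u \<in> barren G (H1 \<union> H2)" "(k, u) \<in> (dedges G)\<^sup>*" "k \<in> verts G"
    using barren_exists_descendant[OF assms(1)] k(2) by blast
  have "u \<notin> H"
  proof
    assume "u \<in> H"
    then have "k \<in> anc_set G H" using u(2,3) by (auto simp: anc_set_iff)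
    then show False using head_step_dis(1)[OF assms(1,2)] k(1) by blast
  qed
  then show ?thesis using u(1) by blast
qed

lemma dis_anc_barren_Un_Diff:
  assumes "MAG G" "head_step G H1 K H" "head_step G H2 L H" "Max H1 = Max H2"
  defines "H3 \<equiv> barren G (H1 \<union> H2)"
  shows "dis (induced G (anc_set G H3 - (H3 - H))) (Max H1) = dis (induced G (anc_set G H)) (Max H1)"
proof -
  define i where "i = Max H1"
  define S3 where "S3 = anc_set G H3 - (H3 - H)"
  define D where "D = dis (induced G (anc_set G H)) i"
  have hd1: "head G H1" and K: "K \<subseteq> H1" and hd2: "head G H2" and L: "L \<subseteq> H2"
    using assms(2,3) by (auto simp: head_step_def)
  note h1 = headD[OF assms(1) hd1] and h2 = headD[OF assms(1) hd2]
  note step1 = head_step_dis[OF assms(1,2), folded i_def, folded D_def]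
  note step2 = head_step_dis[OF assms(1,3), folded assms(4), folded i_def, folded D_def]
  have A3: "anc_set G H3 = anc_set G H1 \<union> anc_set G H2"
    using anc_set_barren[OF assms(1), of "H1 \<union> H2"] h1(1) h2(1) anc_set_Un unfolding H3_def by simp
  have anc3: "ancestral G S3"
    unfolding S3_def H3_def using ancestral_anc_set_Diff[OF assms(1) barren_idem] by blast
  have HD: "H \<subseteq> D" using step1(3) barren_subset[of G D] by auto
  have "H \<subseteq> anc_set G H" using HD dis_induced_subset unfolding D_def by blast
  then have "H \<subseteq> S3" using step1(1) A3 unfolding S3_def by blast
  then have "anc_set G H \<subseteq> S3" using anc_set_subset_ancestral[OF anc3] by blast
  then have "D \<subseteq> dis (induced G S3) i" unfolding D_def by (rule dis_induced_mono)
  moreover have "dis (induced G S3) i \<subseteq> D"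
  proof (rule dis_induced_subsetI)
    show "i \<in> D" using step1(4) .
    fix x y assume xy: "(x, y) \<in> bedges G" and x: "x \<in> S3" and y: "y \<in> D"
    consider "x \<in> anc_set G H1 - K" | "x \<in> anc_set G H2 - L"
      | "x \<in> anc_set G H3" "x \<in> anc_set G H1 \<Longrightarrow> x \<in> H1" "x \<in> anc_set G H2 \<Longrightarrow> x \<in> H2"
      using x K L unfolding S3_def by blast
    then show "x \<in> D"
    proof cases
      case 1
      then show ?thesis using dis_induced_closed[OF assms(1) xy] y step1(2) by blast
    next
      case 2
      then show ?thesis using dis_induced_closed[OF assms(1) xy] y step2(2) by blast
    next
      case 3
      then have "x \<in> H3"
        using barren_Un_memI[OF h1(4) h2(4)] A3 unfolding H3_def by blast
      then show ?thesis using x HD unfolding S3_def by blast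
    qed
  qed
  ultimately show ?thesis unfolding S3_def D_def i_def by blast
qed

theorem propositionC6:
  fixes G :: mgraph and H1 H2 H :: "nat set" and i :: nat
  assumes "MAG G"
    and "head G H1" and "head G H2" and "head G H"
    and "Max H1 = i" and "Max H2 = i" and "Max H = i"
    and "\<exists>K. head_step G H1 K H"
    and "\<exists>L. head_step G H2 L H"
  shows "head G (barren G (H1 \<union> H2)) \<and>
         head_step G (barren G (H1 \<union> H2)) (barren G (H1 \<union> H2) - H) H"
proof -
  obtain K L where K: "head_step G H1 K H" and L: "head_step G H2 L H"
    using assms(8,9) by blast
  define H3 where "H3 = barren G (H1 \<union> H2)"
  define S3 where "S3 = anc_set G H3 - (H3 - H)"
  have head3: "head G H3" and max3: "Max H3 = i"
    using head_barren_Un[OF assms(1-3)] assms(5,6) unfolding H3_def by auto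
  have "H3 - H \<noteq> {}"
    using barren_Un_Diff_nonempty[OF assms(1) K headD(1)[OF assms(1,3)]] unfolding H3_def .
  moreover have "i \<in> H" using Max_head_mem[OF assms(1,4)] assms(7) by simp
  moreover have dis3: "dis (induced G S3) i = dis (induced G (anc_set G H)) i"
    using dis_anc_barren_Un_Diff[OF assms(1) K L] assms(5,6) unfolding S3_def H3_def by simp
  moreover have "H = barren (induced G S3) (dis (induced G S3) i)"
  proof -
    have "ancestral G S3"
      using ancestral_anc_set_Diff[OF assms(1) barren_idem] unfolding S3_def H3_def by blast
    then have "barren (induced G S3) (dis (induced G S3) i) = barren G (dis (induced G S3) i)"
      using dis_induced_subset by (intro barren_induced_ancestral) blast+
    then show ?thesis using head_step_dis(3)[OF assms(1) K] dis3 assms(5) by simp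
  qed
  ultimately have "head_step G H3 (H3 - H) H"
    using head3 max3 unfolding head_step_def Let_def S3_def by auto
  then show ?thesis using head3 unfolding H3_def by simp
qed

end
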